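(* Let $n$ be a prime. For every nonnegative integer $s < n-1$, \[ \sum_{k=1}^{n-1-s} \frac{1}{k}\binom{k+s}{s} \equiv -\sum_{k=1}^{n-1-s} \frac{1}{k} \pmod{n}. \] In particular, if $n>2$, then $\sum_{k=1}^{n-1} \frac{1}{k} \equiv 0 \pmod{n}$.
   Context: For $1\le k\le n-1$, $\frac{1}{k}$ denotes the multiplicative inverse of $k$ modulo $n$ (equivalently, the congruences are congruences of rationals with denominators prime to $n$). *)

theory Defs
  imports "HOL-Number_Theory.Number_Theory"
begin

end

theory Submission
  imports Defs
begin

text \<open>
  Write \<open>1/k\<close> for the inverse of \<open>k\<close> modulo the prime \<open>p\<close>, \<open>H(m)\<close> for the sum of \<open>1/k\<close>
  over \<open>1 \<le> k \<le> m\<close> and \<open>S(s, m)\<close> for the sum of \<open>(1/k) C(k+s, s)\<close> over the same range.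
  Summing the modular form of \<open>(1/k) C(k+s+1, s+1) = (1/k + 1/(s+1)) C(k+s, s)\<close> with the
  hockey-stick identity expresses \<open>S(s+1, m)\<close> through \<open>S(s, m+1)\<close> and the binomial
  coefficients \<open>C(m+s+1, j)\<close>. When \<open>m + s + 2 = p\<close> these are \<open>C(p-1, j) \<equiv> (-1)^j\<close>, and
  together with \<open>1/(p-k) \<equiv> -1/k\<close> the recurrence collapses to
  \<open>S(s+1, m) \<equiv> S(s, m+1) + 1/(m+1)\<close>. Hence \<open>S(s, m) \<equiv> -H(m)\<close> whenever \<open>m + s + 1 = p\<close>, by
  induction on \<open>s\<close> from \<open>H(p-1) \<equiv> -H(p-1)\<close>, which comes from pairing \<open>k\<close> with \<open>p - k\<close>
  and for odd \<open>p\<close> also gives \<open>H(p-1) \<equiv> 0\<close>.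
\<close>

lemma cong_modular_inverse_diff:
  fixes m a :: int
  assumes "m > 0"
  shows "[modular_inverse m (m - a) = - modular_inverse m a] (mod m)"
proof (cases "coprime a m")
  case True
  have "[(m - a) * (- modular_inverse m a) = a * modular_inverse m a] (mod m)"
    by (simp add: cong_iff_dvd_diff algebra_simps)
  also have "[a * modular_inverse m a = 1] (mod m)"
    using True by (rule cong_modular_inverse1)
  finally have "[(m - a) * (- modular_inverse m a mod m) = 1] (mod m)"
    by (metis cong_mod_right cong_refl cong_scalar_left cong_trans)
  then have "modular_inverse m (m - a) = - modular_inverse m a mod m"
    using assms by (intro modular_inverse_int_eqI) auto
  then show ?thesis
    by (simp add: cong_def)
next
  case False
  then have "\<not> coprime (m - a) m"
    by (simp add: coprime_iff_gcd_eq_1 gcd_diff2)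
  with False show ?thesis
    by simp
qed

lemma cong_modular_inverse_binomial_Suc:
  fixes m :: int and k s :: nat
  assumes "coprime (int k) m" "coprime (int (s + 1)) m"
  shows "[modular_inverse m k * int ((k + s + 1) choose (s + 1))
          = (modular_inverse m k + modular_inverse m (s + 1)) * int ((k + s) choose s)] (mod m)"
proof -
  let ?i = "modular_inverse m k" and ?j = "modular_inverse m (s + 1)"
  let ?C = "int ((k + s) choose s)" and ?D = "int ((k + s + 1) choose (s + 1))"
  have ki: "[int k * ?i = 1] (mod m)" and sj: "[int (s + 1) * ?j = 1] (mod m)"
    using assms by (auto intro: cong_modular_inverse1)
  have "(s + 1) * ((k + s + 1) choose (s + 1)) = (k + s + 1) * ((k + s) choose s)"
    using Suc_times_binomial_eq[of "k + s" s] by (simp only: Suc_eq_plus1 add.assoc mult.commute)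
  then have pascal: "int (s + 1) * ?D = int (k + s + 1) * ?C"
    by (metis of_nat_mult)
  have lhs: "[int k * int (s + 1) * (?i * ?D) = int (k + s + 1) * ?C] (mod m)"
  proof -
    have "int k * int (s + 1) * (?i * ?D) = (int k * ?i) * (int (k + s + 1) * ?C)"
      unfolding pascal[symmetric] by (simp only: mult_ac)
    also have "[\<dots> = 1 * (int (k + s + 1) * ?C)] (mod m)"
      by (intro cong_mult ki cong_refl)
    finally show ?thesis
      by simp
  qed
  have rhs: "[int k * int (s + 1) * ((?i + ?j) * ?C) = int (k + s + 1) * ?C] (mod m)"
  proof -
    have "int k * int (s + 1) * ((?i + ?j) * ?C)
        = (int k * ?i) * (int (s + 1) * ?C) + (int (s + 1) * ?j) * (int k * ?C)"
      by (simp add: algebra_simps)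
    also have "[\<dots> = 1 * (int (s + 1) * ?C) + 1 * (int k * ?C)] (mod m)"
      by (intro cong_add cong_mult ki sj cong_refl)
    finally show ?thesis
      by (simp add: algebra_simps)
  qed
  have "coprime (int k * int (s + 1)) m"
    using assms by simp
  moreover from lhs rhs
  have "[int k * int (s + 1) * (?i * ?D) = int k * int (s + 1) * ((?i + ?j) * ?C)] (mod m)"
    by (rule cong_trans[OF _ cong_sym])
  ultimately show ?thesis
    by (simp only: cong_mult_lcancel)
qed

lemma cong_binomial_prime_minus_one:
  fixes p j :: nat
  assumes "prime p" "j < p"
  shows "[int ((p - 1) choose j) = (- 1) ^ j] (mod int p)"
  using assms(2)
proof (induction j)
  case 0
  then show ?case by simp
next
  case (Suc j)
  have "int ((p - 1) choose Suc j) = int (p choose Suc j) - int ((p - 1) choose j)"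
    using choose_reduce_nat[of p "Suc j"] prime_gt_0_nat[OF assms(1)] by simp
  also have "[\<dots> = 0 - (- 1) ^ j] (mod int p)"
  proof (intro cong_diff)
    show "[int (p choose Suc j) = 0] (mod int p)"
      using dvd_choose_prime[OF Suc.prems] assms(1) by (simp add: cong_0_iff)
    show "[int ((p - 1) choose j) = (- 1) ^ j] (mod int p)"
      using Suc by simp
  qed
  finally show ?case
    by simp
qed

lemma hockey_stick_atLeast1:
  "(\<Sum>k=1..m. (k + s) choose s) + 1 = (m + s + 1) choose (s + 1)"
  by (induction m) simp_all

definition harmonic_mod :: "nat \<Rightarrow> nat \<Rightarrow> int" where
  "harmonic_mod p m = (\<Sum>k=1..m. modular_inverse (int p) (int k))"

definition binomial_harmonic_mod :: "nat \<Rightarrow> nat \<Rightarrow> nat \<Rightarrow> int" where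
  "binomial_harmonic_mod p s m = (\<Sum>k=1..m. modular_inverse (int p) (int k) * int ((k + s) choose s))"

lemma harmonic_mod_reflect:
  "[harmonic_mod p (p - 1) = - harmonic_mod p (p - 1)] (mod int p)"
proof -
  have "harmonic_mod p (p - 1) = (\<Sum>k=1..p - 1. modular_inverse (int p) (int p - int k))"
    unfolding harmonic_mod_def
    by (rule sum.reindex_bij_witness[of _ "\<lambda>k. p - k" "\<lambda>k. p - k"]) auto
  also have "[\<dots> = (\<Sum>k=1..p - 1. - modular_inverse (int p) (int k))] (mod int p)"
    by (intro cong_sum cong_modular_inverse_diff) auto
  also have "(\<Sum>k=1..p - 1. - modular_inverse (int p) (int k)) = - harmonic_mod p (p - 1)"
    by (simp add: harmonic_mod_def sum_negf)
  finally show ?thesis .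
qed

lemma harmonic_mod_prime_cong_0:
  assumes "prime p" "p > 2"
  shows "[harmonic_mod p (p - 1) = 0] (mod int p)"
proof -
  have "int p dvd 2 * harmonic_mod p (p - 1)"
    using harmonic_mod_reflect[of p] by (simp add: cong_iff_dvd_diff)
  moreover have "\<not> int p dvd 2"
    using assms(2) by (auto dest: zdvd_imp_le)
  ultimately show ?thesis
    using assms(1) by (simp add: cong_0_iff prime_dvd_mult_iff)
qed

lemma coprime_int_less_prime:
  assumes "prime p" "0 < k" "k < p"
  shows "coprime (int k) (int p)"
proof -
  have "coprime p k"
    using assms by (intro prime_imp_coprime) (auto dest: dvd_imp_le)
  then show ?thesis
    by (simp add: coprime_commute)
qed

lemma binomial_harmonic_mod_Suc_cong:
  assumes "prime p" "m + s + 1 < p"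
  shows "[binomial_harmonic_mod p (Suc s) m
          = binomial_harmonic_mod p s (m + 1)
            - modular_inverse (int p) (int (m + 1)) * int ((m + s + 1) choose s)
            + modular_inverse (int p) (int (s + 1)) * (int ((m + s + 1) choose (s + 1)) - 1)]
         (mod int p)"
proof -
  let ?inv = "\<lambda>k. modular_inverse (int p) (int k)"
  have "binomial_harmonic_mod p (Suc s) m
      = (\<Sum>k=1..m. ?inv k * int ((k + s + 1) choose (s + 1)))"
    by (simp add: binomial_harmonic_mod_def)
  also have "[\<dots> = (\<Sum>k=1..m. (?inv k + ?inv (s + 1)) * int ((k + s) choose s))] (mod int p)"
    using assms
    by (intro cong_sum cong_modular_inverse_binomial_Suc coprime_int_less_prime) auto
  also have "(\<Sum>k=1..m. (?inv k + ?inv (s + 1)) * int ((k + s) choose s))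
      = binomial_harmonic_mod p s m + ?inv (s + 1) * int (\<Sum>k=1..m. (k + s) choose s)"
    by (simp add: binomial_harmonic_mod_def algebra_simps sum.distrib sum_distrib_left)
  also have "binomial_harmonic_mod p s m = binomial_harmonic_mod p s (m + 1)
      - ?inv (m + 1) * int ((m + s + 1) choose s)"
    by (simp add: binomial_harmonic_mod_def add_ac)
  also have "int (\<Sum>k=1..m. (k + s) choose s) = int ((m + s + 1) choose (s + 1)) - 1"
    unfolding hockey_stick_atLeast1[symmetric] by simp
  finally show ?thesis .
qed

lemma binomial_harmonic_mod_cong:
  assumes "prime p" "m + s + 1 = p"
  shows "[binomial_harmonic_mod p s m = - harmonic_mod p m] (mod int p)"
  using assms(2)
proof (induction s arbitrary: m)
  case 0
  then have "m = p - 1"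
    by simp
  then show ?case
    using harmonic_mod_reflect[of p] by (simp add: binomial_harmonic_mod_def harmonic_mod_def)
next
  case (Suc s)
  let ?inv = "\<lambda>k. modular_inverse (int p) (int k)"
  have complement: "int p - int (s + 1) = int (m + 1)"
    by (subst Suc.prems[symmetric]) simp
  have flip: "[?inv (m + 1) = - ?inv (s + 1)] (mod int p)"
    using cong_modular_inverse_diff[of "int p" "int (s + 1)", unfolded complement]
      prime_gt_0_nat[OF assms(1)] by simp
  have top: "m + s + 1 = p - 1"
    using Suc.prems by simp
  have "[binomial_harmonic_mod p (Suc s) m
      = binomial_harmonic_mod p s (m + 1) - ?inv (m + 1) * int ((p - 1) choose s)
        + ?inv (s + 1) * (int ((p - 1) choose (s + 1)) - 1)] (mod int p)"
    using binomial_harmonic_mod_Suc_cong[OF assms(1), of m s] Suc.prems unfolding top by simp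
  also have "[binomial_harmonic_mod p s (m + 1) - ?inv (m + 1) * int ((p - 1) choose s)
        + ?inv (s + 1) * (int ((p - 1) choose (s + 1)) - 1)
      = - harmonic_mod p (m + 1) - (- ?inv (s + 1)) * (- 1) ^ s
        + ?inv (s + 1) * (- ((- 1) ^ s) - 1)] (mod int p)"
    using Suc cong_binomial_prime_minus_one[OF assms(1), of s]
      cong_binomial_prime_minus_one[OF assms(1), of "s + 1"]
    by (intro cong_add cong_diff cong_mult cong_refl flip) auto
  also have "- harmonic_mod p (m + 1) - (- ?inv (s + 1)) * (- 1) ^ s
        + ?inv (s + 1) * (- ((- 1) ^ s) - 1)
      = - harmonic_mod p m - ?inv (m + 1) - ?inv (s + 1)"
    by (simp add: harmonic_mod_def algebra_simps)
  also have "[\<dots> = - harmonic_mod p m - (- ?inv (s + 1)) - ?inv (s + 1)] (mod int p)"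
    by (intro cong_diff cong_refl flip)
  finally show ?case
    by simp
qed

lemma sum_atLeastAtMost_of_nat:
  "(\<Sum>k\<in>{1..int m}. f k) = (\<Sum>k=1..m. f (int k))"
  by (rule sum.reindex_bij_witness[of _ int nat]) auto

theorem theorem4p1:
  fixes n :: int
  assumes "prime n"
  shows "(\<forall>s::nat. int s < n - 1 \<longrightarrow>
           [(\<Sum>k\<in>{1..n - 1 - int s}. modular_inverse n k * ((nat k + s) choose s))
             = - (\<Sum>k\<in>{1..n - 1 - int s}. modular_inverse n k)] (mod n))
       \<and> (n > 2 \<longrightarrow> [(\<Sum>k\<in>{1..n - 1}. modular_inverse n k) = 0] (mod n))"
proof -
  define p where "p = nat n"
  have n: "n = int p"
    using assms by (simp add: p_def prime_ge_0_int)
  with assms have p: "prime p"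
    by simp
  have "[(\<Sum>k\<in>{1..n - 1 - int s}. modular_inverse n k * ((nat k + s) choose s))
          = - (\<Sum>k\<in>{1..n - 1 - int s}. modular_inverse n k)] (mod n)"
    if "int s < n - 1" for s :: nat
  proof -
    define m where "m = p - 1 - s"
    have range: "n - 1 - int s = int m" and "m + s + 1 = p"
      using that n by (auto simp: m_def)
    then have "[binomial_harmonic_mod p s m = - harmonic_mod p m] (mod n)"
      using binomial_harmonic_mod_cong[OF p] n by simp
    then show ?thesis
      unfolding range sum_atLeastAtMost_of_nat
      by (simp add: binomial_harmonic_mod_def harmonic_mod_def n)
  qed
  moreover have "[(\<Sum>k\<in>{1..n - 1}. modular_inverse n k) = 0] (mod n)" if "n > 2"
  proof -
    have range: "n - 1 = int (p - 1)"
      using that n by simp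
    show ?thesis
      using harmonic_mod_prime_cong_0[OF p] that
      unfolding range sum_atLeastAtMost_of_nat by (simp add: harmonic_mod_def n)
  qed
  ultimately show ?thesis
    by blast
qed

end
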